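(* Let $\hat H(w)=e^{-w}$, and let $\alpha,\beta\in\mathbb{R}$ with $\beta>1$ and $\beta>\alpha^2/4$. For $\tilde\tau>0$ and $\omega>0$, the number $i\omega$ is a root of $\Phi(w)=0$ if and only if there exist $k\in\mathbb{Z}$ and a sign $\pm$ such that $$\omega=\omega_k^{\pm}:=\pm\tfrac12\arccos\frac{\alpha}{2\sqrt\beta}+k\pi-\arctan\sqrt{\sqrt\beta-1}\quad\text{and}\quad \tilde\tau=\frac{\omega_k^{\pm}}{\sqrt{\sqrt\beta-1}}.$$ If $\beta\le 1$ and $\beta>\alpha^2/4$, there is no $\tilde\tau>0$ for which $\Phi$ has a root $i\omega$ with $\omega>0$.
   Context: For a delay-to-time-constant ratio $\tilde\tau>0$ and $\alpha,\beta\in\mathbb{R}$, the rescaled characteristic equation of the linearized coupled Wilson–Cowan system with kernel transform $\hat H$ is $$\Phi(w):=(w+\tilde\tau)^4-\alpha\,\tilde\tau^2(w+\tilde\tau)^2\hat H(w)^2+\beta\,\tilde\tau^4\hat H(w)^4=0.$$ For the Dirac (discrete) delay kernel, $\hat H(w)=e^{-w}$. *)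

theory Defs
  imports Complex_Main
begin

text \<open>Kernel transform of the Dirac (discrete) delay kernel.\<close>
definition Hhat :: "complex \<Rightarrow> complex" where
  "Hhat w = exp (- w)"

definition Phi :: "real \<Rightarrow> real \<Rightarrow> real \<Rightarrow> complex \<Rightarrow> complex" where
  "Phi \<alpha> \<beta> \<tau> w =
     (w + of_real \<tau>) ^ 4
     - of_real \<alpha> * of_real \<tau> ^ 2 * (w + of_real \<tau>) ^ 2 * Hhat w ^ 2
     + of_real \<beta> * of_real \<tau> ^ 4 * Hhat w ^ 4"

text \<open>The critical frequencies omega_k^{+-}; s is the sign (1 or -1).\<close>
definition omega_crit :: "real \<Rightarrow> real \<Rightarrow> int \<Rightarrow> real \<Rightarrow> real" where
  "omega_crit \<alpha> \<beta> k s =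
     s * (1/2) * arccos (\<alpha> / (2 * sqrt \<beta>)) + of_int k * pi - arctan (sqrt (sqrt \<beta> - 1))"

end

theory Submission
  imports Defs
begin

text \<open>On the imaginary axis, with c = \<omega>/\<tau> and Q = ((1 + i c) e^(i\<omega>))^2 =
  (1 + c^2) e^(2i (arctan c + \<omega>)), the characteristic function factors as
  \<Phi>(i\<omega>) = \<tau>^4 e^(-4i\<omega>) (Q^2 - \<alpha> Q + \<beta>). Since \<beta> > \<alpha>^2/4, the roots of
  z^2 - \<alpha> z + \<beta> are \<surd>\<beta> e^(\<plusminus>i\<theta>) with cos \<theta> = \<alpha>/(2\<surd>\<beta>). Comparing moduli gives
  1 + c^2 = \<surd>\<beta>, impossible for \<beta> \<le> 1 and forcing c = \<surd>(\<surd>\<beta> - 1) otherwise;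
  comparing arguments gives 2 (arctan c + \<omega>) = \<plusminus>\<theta> mod 2\<pi>, which is \<omega> = \<omega>_k^\<plusminus>.\<close>

lemma rcis_eq_rcis_iff:
  assumes "r1 > 0" "r2 > 0"
  shows "rcis r1 a = rcis r2 b \<longleftrightarrow> r1 = r2 \<and> (\<exists>n::int. a = b + 2 * pi * n)"
proof
  assume eq: "rcis r1 a = rcis r2 b"
  then have "cmod (rcis r1 a) = cmod (rcis r2 b)" by simp
  then have r: "r1 = r2" using assms by simp
  with eq assms have "sin a = sin b \<and> cos a = cos b"
    by (simp add: complex_eq_iff rcis_def)
  with r show "r1 = r2 \<and> (\<exists>n::int. a = b + 2 * pi * n)"
    by (simp add: sin_cos_eq_iff)
next
  assume "r1 = r2 \<and> (\<exists>n::int. a = b + 2 * pi * n)"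
  then show "rcis r1 a = rcis r2 b"
    by (auto simp: rcis_def complex_eq_iff sin_add cos_add)
qed

lemma one_plus_imaginary_eq_rcis: "1 + \<i> * of_real c = rcis (sqrt (1 + c\<^sup>2)) (arctan c)"
proof -
  have "1 + c\<^sup>2 > 0" by (simp add: add_pos_nonneg)
  then show ?thesis by (simp add: complex_eq_iff rcis_def cos_arctan sin_arctan)
qed

lemma quadratic_eq_0_iff_rcis:
  fixes \<alpha> \<beta> :: real and z :: complex
  assumes "\<alpha>\<^sup>2 / 4 < \<beta>"
  defines "\<theta> \<equiv> arccos (\<alpha> / (2 * sqrt \<beta>))"
  shows "z\<^sup>2 - \<alpha> * z + \<beta> = 0 \<longleftrightarrow> z = rcis (sqrt \<beta>) \<theta> \<or> z = rcis (sqrt \<beta>) (- \<theta>)"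
proof -
  have \<beta>_pos: "\<beta> > 0" using assms(1) by (smt (verit) zero_le_power2 divide_nonneg_pos)
  have "\<alpha>\<^sup>2 < (2 * sqrt \<beta>)\<^sup>2" using assms(1) \<beta>_pos by (simp add: power_mult_distrib)
  then have "\<bar>\<alpha>\<bar> < 2 * sqrt \<beta>" using \<beta>_pos power2_less_imp_less[of "\<bar>\<alpha>\<bar>" "2 * sqrt \<beta>"] by simp
  then have "\<bar>\<alpha> / (2 * sqrt \<beta>)\<bar> \<le> 1" using \<beta>_pos by (simp add: abs_divide)
  then have cos_\<theta>: "cos \<theta> = \<alpha> / (2 * sqrt \<beta>)" unfolding \<theta>_def by (simp add: cos_arccos_abs)
  have sum: "rcis (sqrt \<beta>) \<theta> + rcis (sqrt \<beta>) (- \<theta>) = \<alpha>"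
    using cos_\<theta> \<beta>_pos by (simp add: complex_eq_iff)
  have prod: "rcis (sqrt \<beta>) \<theta> * rcis (sqrt \<beta>) (- \<theta>) = \<beta>"
    using \<beta>_pos by (simp add: rcis_mult)
  have "z\<^sup>2 - \<alpha> * z + \<beta> = (z - rcis (sqrt \<beta>) \<theta>) * (z - rcis (sqrt \<beta>) (- \<theta>))"
    by (simp add: algebra_simps power2_eq_square flip: sum prod)
  then show ?thesis by simp
qed

lemma Phi_imaginary_axis:
  fixes \<alpha> \<beta> \<tau> \<omega> :: real and Q :: complex
  assumes "\<tau> > 0"
  defines "Q \<equiv> rcis (1 + (\<omega> / \<tau>)\<^sup>2) (2 * (arctan (\<omega> / \<tau>) + \<omega>))"
  shows "Phi \<alpha> \<beta> \<tau> (\<i> * \<omega>) = \<tau> ^ 4 * Hhat (\<i> * \<omega>) ^ 4 * (Q\<^sup>2 - \<alpha> * Q + \<beta>)"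
proof -
  define c where "c = \<omega> / \<tau>"
  define H where "H = Hhat (\<i> * \<omega>)"
  have H: "H = cis (- \<omega>)" unfolding H_def Hhat_def by (simp add: cis_conv_exp)
  have "(1 + \<i> * c) * cis \<omega> = rcis (sqrt (1 + c\<^sup>2)) (arctan c + \<omega>)"
    by (simp add: one_plus_imaginary_eq_rcis rcis_def cis_mult mult.assoc)
  then have "Q = ((1 + \<i> * c) * cis \<omega>)\<^sup>2"
    by (simp add: Q_def c_def DeMoivre2 add_pos_nonneg)
  also have "\<dots> = (1 + \<i> * c)\<^sup>2 / H\<^sup>2"
    by (simp add: H power_mult_distrib divide_inverse power_inverse flip: cis_inverse)
  finally have "(1 + \<i> * c)\<^sup>2 = H\<^sup>2 * Q" by (simp add: H field_simps)
  moreover have "\<i> * \<omega> + \<tau> = \<tau> * (1 + \<i> * c)"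
    using assms by (simp add: c_def field_simps)
  ultimately have square: "(\<i> * \<omega> + \<tau>)\<^sup>2 = \<tau>\<^sup>2 * H\<^sup>2 * Q"
    by (simp add: power_mult_distrib)
  have "Phi \<alpha> \<beta> \<tau> (\<i> * \<omega>) =
      ((\<i> * \<omega> + \<tau>)\<^sup>2)\<^sup>2 - \<alpha> * \<tau>\<^sup>2 * (\<i> * \<omega> + \<tau>)\<^sup>2 * H\<^sup>2 + \<beta> * \<tau> ^ 4 * H ^ 4"
    by (simp add: Phi_def H_def flip: power_mult)
  also have "\<dots> = \<tau> ^ 4 * H ^ 4 * (Q\<^sup>2 - \<alpha> * Q + \<beta>)"
    unfolding square of_real_mult of_real_power by algebra
  finally show ?thesis by (simp add: H_def)
qed

lemma Phi_imaginary_axis_eq_0_iff: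
  fixes \<alpha> \<beta> \<tau> \<omega> :: real
  assumes "\<tau> > 0" "\<alpha>\<^sup>2 / 4 < \<beta>"
  shows "Phi \<alpha> \<beta> \<tau> (\<i> * \<omega>) = 0 \<longleftrightarrow>
    1 + (\<omega> / \<tau>)\<^sup>2 = sqrt \<beta> \<and>
    (\<exists>n::int. \<exists>s \<in> {1, -1}. 2 * (arctan (\<omega> / \<tau>) + \<omega>) = s * arccos (\<alpha> / (2 * sqrt \<beta>)) + 2 * pi * n)"
proof -
  define Q where "Q = rcis (1 + (\<omega> / \<tau>)\<^sup>2) (2 * (arctan (\<omega> / \<tau>) + \<omega>))"
  define \<theta> where "\<theta> = arccos (\<alpha> / (2 * sqrt \<beta>))"
  have \<beta>_pos: "\<beta> > 0" using assms(2) by (smt (verit) zero_le_power2 divide_nonneg_pos)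
  have "Phi \<alpha> \<beta> \<tau> (\<i> * \<omega>) = 0 \<longleftrightarrow> Q\<^sup>2 - \<alpha> * Q + \<beta> = 0"
    using assms(1) by (simp add: Phi_imaginary_axis Q_def Hhat_def)
  also have "\<dots> \<longleftrightarrow> Q = rcis (sqrt \<beta>) \<theta> \<or> Q = rcis (sqrt \<beta>) (- \<theta>)"
    using quadratic_eq_0_iff_rcis[OF assms(2)] by (simp add: \<theta>_def)
  also have "\<dots> \<longleftrightarrow> 1 + (\<omega> / \<tau>)\<^sup>2 = sqrt \<beta> \<and>
      (\<exists>n::int. \<exists>s \<in> {1, -1}. 2 * (arctan (\<omega> / \<tau>) + \<omega>) = s * \<theta> + 2 * pi * n)"
    unfolding Q_def using \<beta>_pos
    by (subst (1 2) rcis_eq_rcis_iff) (auto simp: add_pos_nonneg)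
  finally show ?thesis by (simp add: \<theta>_def)
qed

lemma omega_crit_iff:
  "2 * (arctan (sqrt (sqrt \<beta> - 1)) + \<omega>) = s * arccos (\<alpha> / (2 * sqrt \<beta>)) + 2 * pi * k
    \<longleftrightarrow> \<omega> = omega_crit \<alpha> \<beta> k s"
  by (auto simp: omega_crit_def field_simps)

theorem mainTheorem7:
  fixes \<alpha> \<beta> :: real
  shows "(\<beta> > 1 \<and> \<beta> > \<alpha>\<^sup>2 / 4 \<longrightarrow>
           (\<forall>\<tau> \<omega> :: real. \<tau> > 0 \<longrightarrow> \<omega> > 0 \<longrightarrow>
              (Phi \<alpha> \<beta> \<tau> (\<i> * of_real \<omega>) = 0 \<longleftrightarrow>
                (\<exists>k :: int. \<exists>s \<in> {1, -1 :: real}.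
                   \<omega> = omega_crit \<alpha> \<beta> k s \<and>
                   \<tau> = omega_crit \<alpha> \<beta> k s / sqrt (sqrt \<beta> - 1)))))
       \<and> (\<beta> \<le> 1 \<and> \<beta> > \<alpha>\<^sup>2 / 4 \<longrightarrow>
           \<not> (\<exists>\<tau> \<omega> :: real. \<tau> > 0 \<and> \<omega> > 0 \<and> Phi \<alpha> \<beta> \<tau> (\<i> * of_real \<omega>) = 0))"
proof (intro conjI impI allI)
  fix \<tau> \<omega> :: real
  assume \<beta>: "1 < \<beta> \<and> \<alpha>\<^sup>2 / 4 < \<beta>" and "0 < \<tau>" "0 < \<omega>"
  define c0 where "c0 = sqrt (sqrt \<beta> - 1)"
  have "c0 > 0" using \<beta> by (simp add: c0_def)
  have "1 + (\<omega> / \<tau>)\<^sup>2 = sqrt \<beta> \<longleftrightarrow> \<omega> / \<tau> = c0"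
  proof
    assume "1 + (\<omega> / \<tau>)\<^sup>2 = sqrt \<beta>"
    then show "\<omega> / \<tau> = c0"
      unfolding c0_def using \<open>0 < \<tau>\<close> \<open>0 < \<omega>\<close> by (intro real_sqrt_unique[symmetric]) auto
  qed (use \<beta> in \<open>simp add: c0_def\<close>)
  then have "Phi \<alpha> \<beta> \<tau> (\<i> * \<omega>) = 0 \<longleftrightarrow> \<omega> / \<tau> = c0 \<and>
      (\<exists>k::int. \<exists>s \<in> {1, -1}. 2 * (arctan c0 + \<omega>) = s * arccos (\<alpha> / (2 * sqrt \<beta>)) + 2 * pi * k)"
    using \<beta> \<open>0 < \<tau>\<close> by (auto simp: Phi_imaginary_axis_eq_0_iff)
  also have "\<dots> \<longleftrightarrow> \<tau> = \<omega> / c0 \<and> (\<exists>k::int. \<exists>s \<in> {1, -1}. \<omega> = omega_crit \<alpha> \<beta> k s)"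
    using \<open>0 < \<tau>\<close> \<open>c0 > 0\<close> unfolding c0_def omega_crit_iff by (auto simp: field_simps)
  finally show "Phi \<alpha> \<beta> \<tau> (\<i> * \<omega>) = 0 \<longleftrightarrow> (\<exists>k :: int. \<exists>s \<in> {1, -1 :: real}.
      \<omega> = omega_crit \<alpha> \<beta> k s \<and> \<tau> = omega_crit \<alpha> \<beta> k s / sqrt (sqrt \<beta> - 1))"
    by (auto simp: c0_def)
next
  assume \<beta>: "\<beta> \<le> 1 \<and> \<alpha>\<^sup>2 / 4 < \<beta>"
  show "\<not> (\<exists>\<tau> \<omega> :: real. \<tau> > 0 \<and> \<omega> > 0 \<and> Phi \<alpha> \<beta> \<tau> (\<i> * \<omega>) = 0)"
  proof clarify
    fix \<tau> \<omega> :: real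
    assume "\<tau> > 0" "\<omega> > 0" "Phi \<alpha> \<beta> \<tau> (\<i> * \<omega>) = 0"
    then have "1 + (\<omega> / \<tau>)\<^sup>2 = sqrt \<beta>" using \<beta> by (simp add: Phi_imaginary_axis_eq_0_iff)
    moreover have "(\<omega> / \<tau>)\<^sup>2 > 0" using \<open>\<tau> > 0\<close> \<open>\<omega> > 0\<close> by simp
    moreover have "sqrt \<beta> \<le> 1" using \<beta> by simp
    ultimately show False by linarith
  qed
qed

end
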